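(* For every countable graph $G$ with $G < K_\omega$ there exists a countable graph $G''$ with $G < G'' < K_\omega$; that is, no pair $(G, K_\omega)$ is a gap in the class of all countable graphs.
   Context: All graphs are simple, undirected and loopless. $G \le H$ means there is a homomorphism (edge-preserving vertex map) $G \to H$; $G < H$ means $G \le H$ and $H \not\le G$. $K_\omega$ is the countably infinite complete graph. For a class $\mathcal K$ of graphs, a pair $(G_1,G_2)$ with $G_1,G_2\in\mathcal K$, $G_1 < G_2$ is a gap in $\mathcal K$ if there is no $G \in \mathcal K$ with $G_1 < G < G_2$. *)

theory Defs
  imports Main "HOL-Library.Countable_Set"
begin

definition is_graph :: "'a set \<Rightarrow> ('a \<Rightarrow> 'a \<Rightarrow> bool) \<Rightarrow> bool" where
  "is_graph V E \<longleftrightarrow> (\<forall>x y. E x y \<longrightarrow> x \<in> V \<and> y \<in> V) \<and>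
     (\<forall>x y. E x y \<longrightarrow> E y x) \<and> (\<forall>x. \<not> E x x)"

definition countable_graph :: "'a set \<Rightarrow> ('a \<Rightarrow> 'a \<Rightarrow> bool) \<Rightarrow> bool" where
  "countable_graph V E \<longleftrightarrow> is_graph V E \<and> countable V"

definition hom_le :: "'a set \<Rightarrow> ('a \<Rightarrow> 'a \<Rightarrow> bool) \<Rightarrow> 'b set \<Rightarrow> ('b \<Rightarrow> 'b \<Rightarrow> bool) \<Rightarrow> bool" where
  "hom_le V E W F \<longleftrightarrow> (\<exists>f. f ` V \<subseteq> W \<and> (\<forall>x\<in>V. \<forall>y\<in>V. E x y \<longrightarrow> F (f x) (f y)))"

definition hom_less :: "'a set \<Rightarrow> ('a \<Rightarrow> 'a \<Rightarrow> bool) \<Rightarrow> 'b set \<Rightarrow> ('b \<Rightarrow> 'b \<Rightarrow> bool) \<Rightarrow> bool" where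
  "hom_less V E W F \<longleftrightarrow> hom_le V E W F \<and> \<not> hom_le W F V E"

definition K_omega_V :: "nat set" where "K_omega_V = UNIV"
definition K_omega_E :: "nat \<Rightarrow> nat \<Rightarrow> bool" where "K_omega_E x y \<longleftrightarrow> x \<noteq> y"

end

theory Submission
  imports Defs
begin

text \<open>Take for \<open>G''\<close> the cone over \<open>G\<close>, i.e. \<open>G\<close> plus an apex adjacent to every vertex.
  A homomorphism from the cone into \<open>G\<close> restricts to an endomorphism \<open>g\<close> of \<open>G\<close> whose image
  is adjacent to the image \<open>a\<close> of the apex; then \<open>a, g a, g\<^sup>2 a, \<dots>\<close> is an infinite clique
  in \<open>G\<close>, contradicting \<open>K\<^sub>\<omega> \<not>\<le> G\<close>. Conversely a copy of \<open>K\<^sub>\<omega>\<close> in the cone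
  uses the apex at most once, so deleting that vertex leaves a copy of \<open>K\<^sub>\<omega>\<close> in \<open>G\<close>.\<close>

lemma hom_le_trans:
  assumes "hom_le V E V' E'" and "hom_le V' E' V'' E''"
  shows "hom_le V E V'' E''"
proof -
  obtain f where "f ` V \<subseteq> V'" and "\<forall>x\<in>V. \<forall>y\<in>V. E x y \<longrightarrow> E' (f x) (f y)"
    using assms(1) unfolding hom_le_def by blast
  moreover obtain f' where "f' ` V' \<subseteq> V''" and "\<forall>x\<in>V'. \<forall>y\<in>V'. E' x y \<longrightarrow> E'' (f' x) (f' y)"
    using assms(2) unfolding hom_le_def by blast
  ultimately show ?thesis
    unfolding hom_le_def by (intro exI[of _ "f' \<circ> f"]) (auto simp: image_subset_iff)
qed

lemma countable_graph_hom_le_K_omega: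
  assumes "countable_graph V E"
  shows "hom_le V E K_omega_V K_omega_E"
  unfolding hom_le_def K_omega_V_def K_omega_E_def
proof (intro exI[of _ "to_nat_on V"] conjI ballI impI)
  fix x y assume "x \<in> V" "y \<in> V" "E x y"
  then show "to_nat_on V x \<noteq> to_nat_on V y"
    using assms by (auto simp: countable_graph_def is_graph_def)
qed simp

definition relabel_edges :: "'a set \<Rightarrow> ('a \<Rightarrow> 'b) \<Rightarrow> ('a \<Rightarrow> 'a \<Rightarrow> bool) \<Rightarrow> 'b \<Rightarrow> 'b \<Rightarrow> bool" where
  "relabel_edges V h E u v \<longleftrightarrow> (\<exists>x\<in>V. \<exists>y\<in>V. u = h x \<and> v = h y \<and> E x y)"

lemma is_graph_relabel:
  assumes "is_graph V E" and "inj_on h V"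
  shows "is_graph (h ` V) (relabel_edges V h E)"
  using assms unfolding is_graph_def relabel_edges_def inj_on_def by blast

lemma hom_le_relabel: "hom_le V E (h ` V) (relabel_edges V h E)"
  unfolding hom_le_def relabel_edges_def by (intro exI[of _ h]) blast

lemma relabel_hom_le:
  assumes "inj_on h V"
  shows "hom_le (h ` V) (relabel_edges V h E) V E"
  unfolding hom_le_def relabel_edges_def
  using assms by (intro exI[of _ "inv_into V h"]) (auto dest: inj_onD)

lemma countable_graph_nat_copy:
  assumes "countable_graph V E"
  obtains V'' :: "nat set" and E'' :: "nat \<Rightarrow> nat \<Rightarrow> bool"
  where "countable_graph V'' E''" and "hom_le V E V'' E''" and "hom_le V'' E'' V E"
proof (rule that)
  have inj: "inj_on (to_nat_on V) V"
    using assms by (auto simp: countable_graph_def)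
  show "countable_graph (to_nat_on V ` V) (relabel_edges V (to_nat_on V) E)"
    using assms is_graph_relabel[OF _ inj] by (simp add: countable_graph_def)
  show "hom_le V E (to_nat_on V ` V) (relabel_edges V (to_nat_on V) E)"
    by (rule hom_le_relabel)
  show "hom_le (to_nat_on V ` V) (relabel_edges V (to_nat_on V) E) V E"
    by (rule relabel_hom_le[OF inj])
qed

definition cone_V :: "'a set \<Rightarrow> 'a option set" where
  "cone_V V = insert None (Some ` V)"

fun cone_E :: "'a set \<Rightarrow> ('a \<Rightarrow> 'a \<Rightarrow> bool) \<Rightarrow> 'a option \<Rightarrow> 'a option \<Rightarrow> bool" where
  "cone_E V E (Some x) (Some y) \<longleftrightarrow> E x y"
| "cone_E V E (Some x) None \<longleftrightarrow> x \<in> V"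
| "cone_E V E None (Some y) \<longleftrightarrow> y \<in> V"
| "cone_E V E None None \<longleftrightarrow> False"

lemma countable_graph_cone:
  assumes "countable_graph V E"
  shows "countable_graph (cone_V V) (cone_E V E)"
proof -
  have graph: "is_graph V E" and "countable V"
    using assms by (auto simp: countable_graph_def)
  have "u \<in> cone_V V \<and> v \<in> cone_V V \<and> cone_E V E v u" if "cone_E V E u v" for u v
    using graph that by (cases u; cases v) (auto simp: is_graph_def cone_V_def)
  moreover have "\<not> cone_E V E u u" for u
    using graph by (cases u) (auto simp: is_graph_def)
  moreover have "countable (cone_V V)"
    using \<open>countable V\<close> by (simp add: cone_V_def)
  ultimately show ?thesis
    unfolding countable_graph_def is_graph_def by blast
qed

lemma hom_le_cone: "hom_le V E (cone_V V) (cone_E V E)"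
  unfolding hom_le_def cone_V_def
  by (intro exI[of _ Some]) auto

lemma K_omega_hom_le_if_cone_hom_le:
  assumes graph: "is_graph V E" and "hom_le (cone_V V) (cone_E V E) V E"
  shows "hom_le K_omega_V K_omega_E V E"
proof -
  obtain f where fV: "f ` cone_V V \<subseteq> V"
    and fE: "\<forall>u\<in>cone_V V. \<forall>v\<in>cone_V V. cone_E V E u v \<longrightarrow> E (f u) (f v)"
    using assms(2) unfolding hom_le_def by blast
  define g where "g = f \<circ> Some"
  define a where "a = f None"
  have gV: "g x \<in> V" if "x \<in> V" for x
    using fV that by (auto simp: g_def cone_V_def)
  have gE: "E (g x) (g y)" if "x \<in> V" "y \<in> V" "E x y" for x y
    using fE that by (auto simp: g_def cone_V_def)
  have apex: "E (g x) a" if "x \<in> V" for x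
    using fE that by (auto simp: g_def a_def cone_V_def)
  have aV: "a \<in> V"
    using fV by (auto simp: a_def cone_V_def)
  have iterV: "(g ^^ k) x \<in> V" if "x \<in> V" for k x
    using that by (induction k) (auto intro: gV)
  have iter_apex: "E ((g ^^ Suc k) x) ((g ^^ k) a)" if "x \<in> V" for k x
  proof (induction k)
    case 0
    show ?case using apex[OF that] by simp
  next
    case (Suc k)
    have "E (g ((g ^^ Suc k) x)) (g ((g ^^ k) a))"
      using Suc gE iterV aV that by blast
    then show ?case by simp
  qed
  have clique: "E ((g ^^ j) a) ((g ^^ k) a)" if less: "k < j" for j k
  proof -
    obtain m where j: "j = Suc k + m"
      using less_imp_Suc_add[OF less] by auto
    have "E ((g ^^ Suc k) ((g ^^ m) a)) ((g ^^ k) a)"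
      by (rule iter_apex[OF iterV[OF aV]])
    then show ?thesis
      unfolding j by (simp only: funpow_add comp_apply)
  qed
  show ?thesis
    unfolding hom_le_def K_omega_V_def K_omega_E_def
  proof (intro exI[of _ "\<lambda>k. (g ^^ k) a"] conjI ballI impI)
    show "range (\<lambda>k. (g ^^ k) a) \<subseteq> V"
      using iterV aV by blast
    fix j k :: nat assume "j \<noteq> k"
    then consider "k < j" | "j < k" by linarith
    then show "E ((g ^^ j) a) ((g ^^ k) a)"
    proof cases
      case 2
      then show ?thesis using clique[OF 2] graph by (simp add: is_graph_def)
    qed (rule clique)
  qed
qed

lemma K_omega_hom_le_if_K_omega_hom_le_cone:
  assumes "hom_le K_omega_V K_omega_E (cone_V V) (cone_E V E)"
  shows "hom_le K_omega_V K_omega_E V E"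
proof -
  obtain h :: "nat \<Rightarrow> 'a option"
    where hV: "\<And>n. h n \<in> cone_V V" and hE: "\<And>n m. n \<noteq> m \<Longrightarrow> cone_E V E (h n) (h m)"
    using assms unfolding hom_le_def K_omega_V_def K_omega_E_def by (fastforce simp: image_subset_iff)
  obtain N where N: "\<And>n. N \<le> n \<Longrightarrow> h n \<noteq> None"
  proof (cases "\<exists>k. h k = None")
    case True
    then obtain k where "h k = None" by blast
    then have "h n \<noteq> None" if "Suc k \<le> n" for n
      using hE[of n k] that by (cases "h n") auto
    then show ?thesis using that by blast
  next
    case False
    then show ?thesis by (intro that[of 0]) auto
  qed
  have in_V: "the (h (n + N)) \<in> V" for n
    using hV[of "n + N"] N[of "n + N"] by (auto simp: cone_V_def)
  show ?thesis
    unfolding hom_le_def K_omega_V_def K_omega_E_def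
  proof (intro exI[of _ "\<lambda>n. the (h (n + N))"] conjI ballI impI)
    show "range (\<lambda>n. the (h (n + N))) \<subseteq> V"
      using in_V by blast
    fix n m :: nat assume "n \<noteq> m"
    then have "cone_E V E (h (n + N)) (h (m + N))" by (intro hE) simp
    then show "E (the (h (n + N))) (the (h (m + N)))"
      using N[of "n + N"] N[of "m + N"] by (cases "h (n + N)"; cases "h (m + N)") auto
  qed
qed

theorem mainTheorem4:
  fixes V :: "'a set" and E :: "'a \<Rightarrow> 'a \<Rightarrow> bool"
  assumes "countable_graph V E"
    and "hom_less V E K_omega_V K_omega_E"
  shows "\<exists>(V'' :: nat set) (E'' :: nat \<Rightarrow> nat \<Rightarrow> bool).
           countable_graph V'' E'' \<and> hom_less V E V'' E'' \<and> hom_less V'' E'' K_omega_V K_omega_E"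
proof -
  have graph: "is_graph V E"
    using assms(1) by (simp add: countable_graph_def)
  have no_K_omega: "\<not> hom_le K_omega_V K_omega_E V E"
    using assms(2) by (simp add: hom_less_def)
  obtain V'' :: "nat set" and E'' :: "nat \<Rightarrow> nat \<Rightarrow> bool"
    where graph'': "countable_graph V'' E''"
      and from_cone: "hom_le (cone_V V) (cone_E V E) V'' E''"
      and to_cone: "hom_le V'' E'' (cone_V V) (cone_E V E)"
    using countable_graph_nat_copy[OF countable_graph_cone[OF assms(1)]] by blast
  have cone_not_le: "\<not> hom_le (cone_V V) (cone_E V E) V E"
    using K_omega_hom_le_if_cone_hom_le[OF graph] no_K_omega by blast
  have K_omega_not_le_cone: "\<not> hom_le K_omega_V K_omega_E (cone_V V) (cone_E V E)"
    using K_omega_hom_le_if_K_omega_hom_le_cone no_K_omega by blast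
  have "hom_less V E V'' E''"
    using hom_le_trans[OF hom_le_cone from_cone] hom_le_trans[OF from_cone] cone_not_le
    unfolding hom_less_def by blast
  moreover have "hom_less V'' E'' K_omega_V K_omega_E"
    using countable_graph_hom_le_K_omega[OF graph''] hom_le_trans[OF _ to_cone] K_omega_not_le_cone
    unfolding hom_less_def by blast
  ultimately show ?thesis
    using graph'' by blast
qed

end
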